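(* Let $\boldsymbol\omega^{\rm(init)}(\mathbf a)=\sum_{\mathbf p\in\mathbb Z^3}\widehat{\boldsymbol\omega}_{\mathbf p}e^{i\mathbf p\cdot\mathbf a}$ be a $2\pi$-periodic divergence-free zero-mean vector field on $\mathbb R^3$ with $\Gamma\equiv\sum_{\mathbf p}|\widehat{\boldsymbol\omega}_{\mathbf p}|<\infty$, and let $\boldsymbol\xi^{(s)}$, $s\ge1$, be the time-Taylor coefficients of the Lagrangian displacement defined in the context. Set $\widetilde T_c=1+\sqrt2-\sqrt{13/3}\approx0.3325$. Then $\sum_{s\ge1}\sum_{\mathbf p}|\mathbf p|\,|\widehat{\boldsymbol\xi}^{(s)}_{\mathbf p}|\,|t|^s<\infty$ for all complex $t$ with $|t|<\widetilde T_c/\Gamma$; in particular, for every $\mathbf a$ the series $\sum_{s\ge1}\boldsymbol\xi^{(s)}(\mathbf a)t^s$ converges in the disk $|t|<\widetilde T_c/\Gamma$.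
   Context: Lagrangian coordinates $\mathbf a$, $\nabla^{\rm L}$ the gradient in $\mathbf a$, $\varepsilon_{ijk}$ the Levi-Civita symbol, $\delta^s_1$ the Kronecker symbol, $\widehat f_{\mathbf p}$ the Fourier coefficients of a $2\pi$-periodic function. Let $\mathbf v^{\rm(init)}$ be the unique $2\pi$-periodic, zero-mean, divergence-free field with curl $\boldsymbol\omega^{\rm(init)}$. The coefficients $\boldsymbol\xi^{(s)}$ are the $2\pi$-periodic, zero-mean vector fields defined recursively by $\nabla^{\rm L}\times\boldsymbol\xi^{(s)}=\boldsymbol\omega^{\rm(init)}\delta^s_1-\sum_{k=1}^3\sum_{0<m<s}\frac{m}{s}\nabla^{\rm L}\xi^{(m)}_k\times\nabla^{\rm L}\xi^{(s-m)}_k$, $\nabla^{\rm L}\cdot\boldsymbol\xi^{(s)}=\sum_{1\le i<j\le3}\sum_{0<m<s}\big((\nabla^{\rm L}_j\xi^{(m)}_i)\nabla^{\rm L}_i\xi^{(s-m)}_j-(\nabla^{\rm L}_i\xi^{(m)}_i)\nabla^{\rm L}_j\xi^{(s-m)}_j\big)-\sum_{i,j,k}\sum_{l+m+n=s,\ l,m,n\ge1}\varepsilon_{ijk}(\nabla^{\rm L}_i\xi^{(l)}_1)(\nabla^{\rm L}_j\xi^{(m)}_2)\nabla^{\rm L}_k\xi^{(n)}_3$ (so $\boldsymbol\xi^{(1)}=\mathbf v^{\rm(init)}$); they are the time-Taylor coefficients of the displacement $\mathbf x(\mathbf a,t)-\mathbf a$ solving Cauchy's Lagrangian form of the incompressible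 Euler equations $\sum_k\nabla^{\rm L}\dot x_k\times\nabla^{\rm L}x_k=\boldsymbol\omega^{\rm(init)}$, $\det\nabla^{\rm L}\mathbf x=1$. *)

theory Defs
  imports "HOL-Analysis.Analysis"
begin

text \<open>Everything is expressed through Fourier coefficients on the lattice \<open>\<int>\<^sup>3\<close>.
  A 2pi-periodic vector field is represented by its coefficient map
  \<open>int^3 \<Rightarrow> complex^3\<close>; a scalar field by \<open>int^3 \<Rightarrow> complex\<close>.\<close>

type_synonym idx = "int ^ 3"
type_synonym vcoef = "idx \<Rightarrow> complex ^ 3"
type_synonym scoef = "idx \<Rightarrow> complex"

definition eps :: "3 \<Rightarrow> 3 \<Rightarrow> 3 \<Rightarrow> int" where
  "eps i j k =
     (if (i,j,k) \<in> {(1,2,3),(2,3,1),(3,1,2)} then 1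
      else if (i,j,k) \<in> {(1,3,2),(3,2,1),(2,1,3)} then -1 else 0)"

definition rvec :: "idx \<Rightarrow> real ^ 3" where
  "rvec p = (\<chi> k. of_int (p $ k))"

definition pdot :: "idx \<Rightarrow> real ^ 3 \<Rightarrow> real" where
  "pdot p a = (\<Sum>k\<in>UNIV. of_int (p $ k) * a $ k)"

text \<open>Fourier coefficients of a product of two periodic functions (convolution).\<close>
definition conv :: "scoef \<Rightarrow> scoef \<Rightarrow> scoef" where
  "conv f g p = (\<Sum>\<^sub>\<infinity>q. f q * g (p - q))"

text \<open>Fourier coefficients of \<open>\<nabla>\<^sub>j \<xi>\<^sub>i\<close>.\<close>
definition dcoef :: "vcoef \<Rightarrow> 3 \<Rightarrow> 3 \<Rightarrow> scoef" where
  "dcoef X i j p = \<i> * of_int (p $ j) * (X p $ i)"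

definition curl_hat :: "vcoef \<Rightarrow> vcoef" where
  "curl_hat X p = (\<chi> i. \<Sum>j\<in>UNIV. \<Sum>k\<in>UNIV. of_int (eps i j k) * dcoef X k j p)"

definition div_hat :: "vcoef \<Rightarrow> scoef" where
  "div_hat X p = (\<Sum>i\<in>UNIV. dcoef X i i p)"

definition curl_rhs :: "vcoef \<Rightarrow> (nat \<Rightarrow> vcoef) \<Rightarrow> nat \<Rightarrow> vcoef" where
  "curl_rhs \<omega> X s p =
     (if s = 1 then \<omega> p else 0)
     - (\<chi> i. \<Sum>k\<in>UNIV. \<Sum>m\<in>{0<..<s}. of_real (real m / real s) *
          (\<Sum>j\<in>UNIV. \<Sum>l\<in>UNIV. of_int (eps i j l) *
              conv (dcoef (X m) k j) (dcoef (X (s - m)) k l) p))"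

definition div_rhs :: "(nat \<Rightarrow> vcoef) \<Rightarrow> nat \<Rightarrow> scoef" where
  "div_rhs X s p =
     (\<Sum>(i,j)\<in>{(1,2),(1,3),(2,3)::3\<times>3}. \<Sum>m\<in>{0<..<s}.
         conv (dcoef (X m) i j) (dcoef (X (s - m)) j i) p
       - conv (dcoef (X m) i i) (dcoef (X (s - m)) j j) p)
     - (\<Sum>i\<in>UNIV. \<Sum>j\<in>UNIV. \<Sum>k\<in>UNIV.
         \<Sum>(l,m,n)\<in>{(l,m,n). 1 \<le> l \<and> 1 \<le> m \<and> 1 \<le> n \<and> l + m + n = s}.
           of_int (eps i j k) *
           conv (conv (dcoef (X l) 1 i) (dcoef (X m) 2 j)) (dcoef (X n) 3 k) p)"

definition field_at :: "vcoef \<Rightarrow> real ^ 3 \<Rightarrow> complex ^ 3" where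
  "field_at F a = (\<Sum>\<^sub>\<infinity>p. exp (\<i> * of_real (pdot p a)) *s F p)"

definition Tc_tilde :: real where
  "Tc_tilde = 1 + sqrt 2 - sqrt (13 / 3)"

end

theory Submission
  imports Defs
begin

text \<open>Let \<open>A\<^sub>s = \<Sum>\<^sub>p |p| |\<xi>\<^sup>(\<^sup>s\<^sup>)\<^sub>p|\<close>. For a single Fourier mode, curl and divergence together have
  exactly the size \<open>|p| |\<xi>\<^sub>p|\<close>, so the defining equations bound \<open>A\<^sub>s\<close> by the \<open>\<ell>\<^sup>1\<close> norms of their
  right-hand sides. These are convolutions of gradient coefficients of lower orders, and \<open>\<ell>\<^sup>1\<close> is
  an algebra under convolution. Symmetrising before estimating gives the constants: pairing the
  term of order \<open>m\<close> with that of order \<open>s - m\<close> leaves the factor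
  \<open>\<kappa>\<^sub>s = \<surd>2/2 - (\<surd>2 - 1)/s\<close>, and the six orderings of the cubic term combine into a product of two
  \<open>3 \<times> 3\<close> determinants, bounded by Hadamard's inequality. Hence
  \<open>A\<^sub>s \<le> \<kappa>\<^sub>s \<Sum>\<^sub>m A\<^sub>m A\<^sub>s\<^sub>-\<^sub>m + (1/6) \<Sum>\<^sub>l\<^sub>+\<^sub>m\<^sub>+\<^sub>n\<^sub>=\<^sub>s A\<^sub>l A\<^sub>m A\<^sub>n\<close> with \<open>A\<^sub>1 = \<Gamma>\<close>, so \<open>A\<^sub>s\<close> is
  dominated by the sequence solving this recursion with equality. Its power series in \<open>|t|\<close> has
  partial sums at most \<open>29/50\<close> as long as \<open>\<Gamma> |t| \<le> 0.3326\<close>, which covers \<open>\<Gamma> |t| < T\<^sub>c\<close>; finally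
  \<open>|\<xi>\<^sup>(\<^sup>s\<^sup>)(a)| \<le> A\<^sub>s\<close> because the coefficients have zero mean.\<close>

section \<open>Single Fourier modes\<close>

lemma norm_cvec3_sq: "norm (a::complex^3) ^ 2 = cmod (a$1)^2 + cmod (a$2)^2 + cmod (a$3)^2"
  by (simp add: norm_vec_def L2_set_def sum_3)

lemma norm_rvec_sq: "norm (rvec p) ^ 2 = real_of_int (p$1)^2 + real_of_int (p$2)^2 + real_of_int (p$3)^2"
  by (simp add: norm_vec_def L2_set_def sum_3 rvec_def)

text \<open>Bilinear, not Hermitian, products on \<open>\<complex>\<^sup>3\<close>.\<close>

definition cdot :: "complex^3 \<Rightarrow> complex^3 \<Rightarrow> complex" where
  "cdot a b = a$1*b$1 + a$2*b$2 + a$3*b$3"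

definition ccross :: "complex^3 \<Rightarrow> complex^3 \<Rightarrow> complex^3" where
  "ccross a b = vector [a$2*b$3-a$3*b$2, a$3*b$1-a$1*b$3, a$1*b$2-a$2*b$1]"

definition cdet :: "complex^3 \<Rightarrow> complex^3 \<Rightarrow> complex^3 \<Rightarrow> complex" where
  "cdet a b c = cdot a (ccross b c)"

definition cvec :: "idx \<Rightarrow> complex^3" where
  "cvec q = (\<chi> k. of_int (q$k))"

lemma norm_cvec: "norm (cvec q) = norm (rvec q)"
  by (simp add: norm_vec_def cvec_def rvec_def)

lemma cmod_cdot_le: "cmod (cdot a b) \<le> norm a * norm b"
proof -
  define na nb :: "real^3" where "na = (\<chi> i. cmod (a$i))" and "nb = (\<chi> i. cmod (b$i))"
  have "cmod (cdot a b) \<le> cmod (a$1) * cmod (b$1) + cmod (a$2) * cmod (b$2) + cmod (a$3) * cmod (b$3)"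
    unfolding cdot_def norm_mult[symmetric]
    by (rule order_trans[OF norm_triangle_ineq add_right_mono[OF norm_triangle_ineq]])
  also have "\<dots> = na \<bullet> nb" by (simp add: na_def nb_def inner_vec_def sum_3)
  also have "\<dots> \<le> norm na * norm nb" by (rule norm_cauchy_schwarz)
  also have "norm na * norm nb = norm a * norm b" by (simp add: na_def nb_def norm_vec_def)
  finally show ?thesis .
qed

text \<open>Lagrange's identity \<open>|a|\<^sup>2 |b|\<^sup>2 - |a \<times> b|\<^sup>2 = |a \<cdot> conj b|\<^sup>2\<close>.\<close>

lemma norm_ccross_le: "norm (ccross a b) \<le> norm a * norm b"
proof -
  have csq: "complex_of_real (cmod z ^ 2) = z * cnj z" for z
    using complex_norm_square[of z] by simp
  have "complex_of_real (norm a ^ 2 * norm b ^ 2 - norm (ccross a b) ^ 2)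
     = complex_of_real (cmod (a$1 * cnj (b$1) + a$2 * cnj (b$2) + a$3 * cnj (b$3)) ^ 2)"
    unfolding norm_cvec3_sq of_real_mult of_real_add of_real_diff csq
    by (simp add: ccross_def vector_def algebra_simps)
  hence "norm a ^ 2 * norm b ^ 2 - norm (ccross a b) ^ 2 \<ge> 0"
    unfolding of_real_eq_iff by simp
  hence "norm (ccross a b) ^ 2 \<le> (norm a * norm b) ^ 2"
    by (simp add: power_mult_distrib)
  thus ?thesis by (rule power2_le_imp_le) simp
qed

lemma cmod_cdet_le: "cmod (cdet a b c) \<le> norm a * norm b * norm c"
proof -
  have "cmod (cdet a b c) \<le> norm a * norm (ccross b c)"
    unfolding cdet_def by (rule cmod_cdot_le)
  also have "\<dots> \<le> norm a * (norm b * norm c)"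
    by (intro mult_left_mono norm_ccross_le norm_ge_zero)
  finally show ?thesis by (simp add: mult.assoc)
qed

lemma norm_curl_div_hat: "norm (curl_hat Y p, div_hat Y p) = norm (rvec p) * norm (Y p)"
proof -
  have cmod2: "cmod z ^ 2 = Re z ^ 2 + Im z ^ 2" for z by (simp add: cmod_power2)
  have "norm (curl_hat Y p) ^ 2 + cmod (div_hat Y p) ^ 2 = norm (rvec p)^2 * norm (Y p)^2"
    unfolding norm_cvec3_sq norm_rvec_sq cmod2
    by (simp add: curl_hat_def div_hat_def dcoef_def sum_3 eps_def) (simp add: power2_eq_square algebra_simps)
  thus ?thesis by (simp add: norm_Pair power_mult_distrib real_sqrt_mult)
qed

lemma norm_vector_smult: "norm (c *s v) = norm c * norm (v :: 'a::real_normed_div_algebra ^ 'n)"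
  by (simp add: norm_vec_def L2_set_def norm_mult power_mult_distrib real_sqrt_mult
      flip: sum_distrib_left)

definition grad_mode :: "idx \<Rightarrow> complex^3 \<Rightarrow> 3 \<Rightarrow> 3 \<Rightarrow> complex" where
  "grad_mode q a k j = \<i> * of_int (q $ j) * (a $ k)"

lemma dcoef_grad_mode: "dcoef X k j q = grad_mode q (X q) k j"
  by (simp add: dcoef_def grad_mode_def)

lemma cmod_grad_mode_le: "cmod (grad_mode q a k j) \<le> norm (rvec q) * norm a"
proof -
  have "\<bar>real_of_int (q$j)\<bar> \<le> norm (rvec q)"
    using Finite_Cartesian_Product.norm_nth_le[of "rvec q" j] by (simp add: rvec_def)
  thus ?thesis
    unfolding grad_mode_def norm_mult by (simp add: mult_mono Finite_Cartesian_Product.norm_nth_le)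
qed

text \<open>Contribution of the modes \<open>a e\<^sup>i\<^sup>q\<^sup>\<cdot>\<^sup>x\<close> (of \<open>\<xi>\<^sup>(\<^sup>m\<^sup>)\<close>) and \<open>b e\<^sup>i\<^sup>v\<^sup>\<cdot>\<^sup>x\<close> (of \<open>\<xi>\<^sup>(\<^sup>s\<^sup>-\<^sup>m\<^sup>)\<close>) to the
  quadratic parts of the curl and divergence right-hand sides, with weight \<open>\<mu> = m/s\<close>.\<close>

definition quad_mode :: "real \<Rightarrow> complex^3 \<Rightarrow> complex^3 \<Rightarrow> idx \<Rightarrow> idx \<Rightarrow> (complex^3) \<times> complex" where
  "quad_mode \<mu> a b q v =
    ((\<chi> i. - (\<Sum>k\<in>UNIV. of_real \<mu> *
          (\<Sum>j\<in>UNIV. \<Sum>l\<in>UNIV. of_int (eps i j l) * (grad_mode q a k j * grad_mode v b k l)))),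
     (\<Sum>(i,j)\<in>{(1,2),(1,3),(2,3)::3\<times>3}.
          grad_mode q a i j * grad_mode v b j i - grad_mode q a i i * grad_mode v b j j))"

lemma fst_quad_mode_sym:
  "fst (quad_mode \<mu> a b q v + quad_mode (1-\<mu>) b a v q)
     = (\<chi> i. of_real (2*\<mu>-1) * (ccross (cvec q) (cvec v) $ i) * cdot a b)"
  unfolding quad_mode_def ccross_def cvec_def cdot_def grad_mode_def
  by (simp add: vec_eq_iff forall_3 sum_3 vector_def eps_def) (simp add: algebra_simps)

lemma snd_quad_mode_sym:
  "snd (quad_mode \<mu> a b q v + quad_mode (1-\<mu>) b a v q) = cdot (ccross a b) (ccross (cvec q) (cvec v))"
  unfolding quad_mode_def ccross_def cvec_def cdot_def grad_mode_def
  by (simp add: sum_3 vector_def eps_def) (simp add: algebra_simps)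

lemma sqrt2_interpolation:
  fixes l :: real
  assumes "0 \<le> l" "l \<le> 1"
  shows "1 + l^2 \<le> (1 + (sqrt 2 - 1) * l)^2"
proof -
  have "(1 + (sqrt 2 - 1) * l)^2 - (1 + l^2) = 2 * (sqrt 2 - 1) * l * (1 - l)"
    by (simp add: power2_eq_square algebra_simps)
  moreover have "0 \<le> 2 * (sqrt 2 - 1) * l * (1 - l)"
    using assms by (simp add: real_le_rsqrt)
  ultimately show ?thesis by linarith
qed

lemma norm_quad_mode_sym_le:
  assumes "0 \<le> \<mu>" "\<mu> \<le> 1"
  shows "norm (quad_mode \<mu> a b q v + quad_mode (1-\<mu>) b a v q)
     \<le> (1 + (sqrt 2 - 1) * \<bar>2*\<mu>-1\<bar>) * (norm (rvec q) * norm (rvec v) * norm a * norm b)"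
proof -
  define S where "S = quad_mode \<mu> a b q v + quad_mode (1-\<mu>) b a v q"
  define w where "w = ccross (cvec q) (cvec v)"
  define P where "P = norm (rvec q) * norm (rvec v) * norm a * norm b"
  have w: "norm w \<le> norm (rvec q) * norm (rvec v)"
    unfolding w_def using norm_ccross_le[of "cvec q" "cvec v"] by (simp add: norm_cvec)
  have "norm (fst S) = \<bar>2*\<mu>-1\<bar> * norm w * cmod (cdot a b)"
  proof -
    have "fst S = (of_real (2*\<mu>-1) * cdot a b) *s w"
      unfolding S_def fst_quad_mode_sym w_def by (simp add: vec_eq_iff mult_ac)
    hence "norm (fst S) = norm (of_real (2*\<mu>-1) * cdot a b) * norm w"
      by (simp only: norm_vector_smult)
    thus ?thesis by (simp only: norm_mult norm_of_real real_norm_def mult_ac)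
  qed
  also have "\<dots> \<le> \<bar>2*\<mu>-1\<bar> * P"
    using mult_mono[OF w cmod_cdot_le] unfolding P_def by (simp add: mult_left_mono mult.assoc)
  finally have fst: "norm (fst S) \<le> \<bar>2*\<mu>-1\<bar> * P" .
  have "cmod (snd S) \<le> norm (ccross a b) * norm w"
    unfolding S_def snd_quad_mode_sym w_def by (rule cmod_cdot_le)
  also have "\<dots> \<le> P"
    using mult_mono[OF norm_ccross_le w] unfolding P_def by (simp add: mult_ac)
  finally have snd: "cmod (snd S) \<le> P" .
  have "norm S ^ 2 = norm (fst S) ^ 2 + cmod (snd S) ^ 2"
    by (cases S) (simp add: norm_Pair)
  also have "\<dots> \<le> (1 + \<bar>2*\<mu>-1\<bar>^2) * P^2"
    using power_mono[OF fst, of 2] power_mono[OF snd, of 2]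
    by (simp add: power_mult_distrib algebra_simps)
  also have "\<dots> \<le> ((1 + (sqrt 2 - 1) * \<bar>2*\<mu>-1\<bar>) * P)^2"
    unfolding power_mult_distrib by (rule mult_right_mono[OF sqrt2_interpolation]) (use assms in auto)
  finally show ?thesis
    unfolding S_def P_def by (rule power2_le_imp_le) (simp add: real_le_rsqrt)
qed

definition cubic_mode ::
    "complex^3 \<Rightarrow> complex^3 \<Rightarrow> complex^3 \<Rightarrow> idx \<Rightarrow> idx \<Rightarrow> idx \<Rightarrow> complex" where
  "cubic_mode a1 a2 a3 u1 u2 u3 = (\<Sum>i\<in>UNIV. \<Sum>j\<in>UNIV. \<Sum>k\<in>UNIV. of_int (eps i j k) *
      (grad_mode u1 a1 1 i * grad_mode u2 a2 2 j * grad_mode u3 a3 3 k))"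

definition cubic_mode_sym ::
    "complex^3 \<Rightarrow> complex^3 \<Rightarrow> complex^3 \<Rightarrow> idx \<Rightarrow> idx \<Rightarrow> idx \<Rightarrow> complex" where
  "cubic_mode_sym a1 a2 a3 u1 u2 u3 =
     cubic_mode a1 a2 a3 u1 u2 u3 + cubic_mode a2 a1 a3 u2 u1 u3 + cubic_mode a3 a2 a1 u3 u2 u1
   + cubic_mode a1 a3 a2 u1 u3 u2 + cubic_mode a2 a3 a1 u2 u3 u1 + cubic_mode a3 a1 a2 u3 u1 u2"

lemma cubic_mode_eq:
  "cubic_mode a1 a2 a3 u1 u2 u3 = - \<i> * (a1$1 * a2$2 * a3$3) * cdet (cvec u1) (cvec u2) (cvec u3)"
  unfolding cubic_mode_def cdet_def cdot_def ccross_def cvec_def grad_mode_def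
  by (simp add: sum_3 eps_def vector_def algebra_simps)

text \<open>Summing over the six ways of assigning the three modes to the three factors turns the
  product of diagonal entries into a full determinant.\<close>

lemma cubic_mode_sym_eq:
  "cubic_mode_sym a1 a2 a3 u1 u2 u3 = - \<i> * cdet a1 a2 a3 * cdet (cvec u1) (cvec u2) (cvec u3)"
  unfolding cubic_mode_sym_def cubic_mode_eq
  unfolding cdet_def cdot_def ccross_def cvec_def
  by (simp add: vector_def algebra_simps)

lemma cmod_cubic_mode_sym_le:
  "cmod (cubic_mode_sym a1 a2 a3 u1 u2 u3)
     \<le> (norm (rvec u1) * norm a1) * (norm (rvec u2) * norm a2) * (norm (rvec u3) * norm a3)"
proof -
  have "cmod (cubic_mode_sym a1 a2 a3 u1 u2 u3) = cmod (cdet a1 a2 a3) * cmod (cdet (cvec u1) (cvec u2) (cvec u3))"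
    unfolding cubic_mode_sym_eq by (simp add: norm_mult)
  also have "\<dots> \<le> (norm a1 * norm a2 * norm a3) * (norm (cvec u1) * norm (cvec u2) * norm (cvec u3))"
    by (intro mult_mono cmod_cdet_le) auto
  finally show ?thesis by (simp add: norm_cvec mult_ac)
qed

definition kappa :: "nat \<Rightarrow> real" where
  "kappa s = sqrt 2 / 2 - (sqrt 2 - 1) / real s"

lemma kappa_nonneg: "s \<ge> 1 \<Longrightarrow> kappa s \<ge> 0"
proof -
  assume s: "s \<ge> 1"
  have "(sqrt 2 - 1) / real s \<le> sqrt 2 - 1"
    using s by (simp add: divide_le_eq real_le_rsqrt mult_le_cancel_left1)
  moreover have "sqrt 2 \<le> 2" using sqrt2_less_2 by simp
  ultimately show ?thesis unfolding kappa_def by linarith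
qed

lemma quad_weight_le_kappa:
  assumes "1 \<le> m" "m < s"
  shows "1 + (sqrt 2 - 1) * \<bar>2 * (real m / real s) - 1\<bar> \<le> 2 * kappa s"
proof -
  have s0: "real s > 0" using assms by simp
  have "\<bar>2 * (real m / real s) - 1\<bar> = \<bar>2 * real m - real s\<bar> / real s"
    using s0 by (simp add: field_simps)
  also have "\<dots> \<le> (real s - 2) / real s"
    using assms s0 by (intro divide_right_mono) auto
  finally have "\<bar>2 * (real m / real s) - 1\<bar> \<le> 1 - 2 / real s"
    using s0 by (simp add: field_simps)
  hence "1 + (sqrt 2 - 1) * \<bar>2 * (real m / real s) - 1\<bar> \<le> 1 + (sqrt 2 - 1) * (1 - 2 / real s)"
    by (simp add: mult_left_mono real_le_rsqrt)
  also have "\<dots> = 2 * kappa s" unfolding kappa_def by (simp add: algebra_simps)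
  finally show ?thesis .
qed

section \<open>Absolutely summable convolutions\<close>

lemma has_sum_sum:
  fixes f :: "'i \<Rightarrow> 'a \<Rightarrow> 'b::topological_comm_monoid_add"
  assumes "finite I" "\<And>i. i \<in> I \<Longrightarrow> (f i has_sum S i) A"
  shows "((\<lambda>x. \<Sum>i\<in>I. f i x) has_sum (\<Sum>i\<in>I. S i)) A"
  using assms by (induction I rule: finite_induct) (auto intro: has_sum_add)

lemma has_sum_diff:
  fixes f g :: "'a \<Rightarrow> 'b::{topological_semigroup_mult, ring_1, topological_comm_monoid_add}"
  assumes "(f has_sum a) A" "(g has_sum b) A"
  shows "((\<lambda>x. f x - g x) has_sum (a - b)) A"
  using has_sum_add[OF assms(1) has_sum_uminusI[OF assms(2)]] by simp

lemma has_sum_vec_lambda: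
  fixes f :: "'a \<Rightarrow> 'b::topological_comm_monoid_add ^ 'n"
  assumes "\<And>i. ((\<lambda>x. f x $ i) has_sum S $ i) A"
  shows "(f has_sum S) A"
proof -
  have "((\<lambda>F. \<chi> i. sum (\<lambda>x. f x $ i) F) \<longlongrightarrow> (\<chi> i. S $ i)) (finite_subsets_at_top A)"
    by (rule tendsto_vec_lambda) (use assms in \<open>simp add: has_sum_def\<close>)
  moreover have "(\<lambda>F. \<chi> i. sum (\<lambda>x. f x $ i) F) = sum f"
    by (auto simp: vec_eq_iff sum_component)
  ultimately show ?thesis by (simp add: has_sum_def)
qed

lemma has_sum_Pair:
  assumes "((\<lambda>x. fst (f x)) has_sum a) A" "((\<lambda>x. snd (f x)) has_sum b) A"
  shows "(f has_sum (a, b)) A"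
proof -
  have "((\<lambda>F. (sum (\<lambda>x. fst (f x)) F, sum (\<lambda>x. snd (f x)) F)) \<longlongrightarrow> (a, b)) (finite_subsets_at_top A)"
    by (rule tendsto_Pair) (use assms in \<open>simp_all add: has_sum_def\<close>)
  moreover have "(\<lambda>F. (sum (\<lambda>x. fst (f x)) F, sum (\<lambda>x. snd (f x)) F)) = sum f"
    by (auto simp: fst_sum snd_sum prod_eq_iff)
  ultimately show ?thesis by (simp add: has_sum_def)
qed

lemma has_sum_product_nonneg:
  fixes f :: "'a \<Rightarrow> real" and g :: "'b \<Rightarrow> real"
  assumes f: "(f has_sum F) A" and g: "(g has_sum G) B"
    and f0: "\<And>x. x \<in> A \<Longrightarrow> f x \<ge> 0" and g0: "\<And>y. y \<in> B \<Longrightarrow> g y \<ge> 0"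
  shows "((\<lambda>(x, y). f x * g y) has_sum (F * G)) (A \<times> B)"
proof -
  have slice: "((\<lambda>y. f x * g y) has_sum (f x * G)) B" for x
    by (rule has_sum_cmult_right[OF g])
  have outer: "((\<lambda>x. f x * G) has_sum (F * G)) A"
    by (rule has_sum_cmult_left[OF f])
  have "(\<lambda>(x, y). f x * g y) summable_on A \<times> B"
    using summable_on_SigmaI[where f = "\<lambda>(x, y). f x * g y", OF _ has_sum_imp_summable[OF outer]]
      slice f0 g0 by simp
  thus ?thesis
    using has_sum_SigmaI[where f = "\<lambda>(x, y). f x * g y", OF _ outer] slice by simp
qed

lemma has_sum_slices:
  fixes h :: "'a \<times> 'b \<Rightarrow> real"
  assumes "(h has_sum S) UNIV"
  shows "(\<lambda>y. h (x, y)) summable_on UNIV" and "((\<lambda>x. \<Sum>\<^sub>\<infinity>y. h (x, y)) has_sum S) UNIV"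
proof -
  have h: "(h has_sum S) (UNIV \<times> UNIV)" using assms by simp
  show slice: "(\<lambda>y. h (x, y)) summable_on UNIV" for x
    using summable_on_SigmaD1[where f = "\<lambda>x y. h (x, y)" and A = UNIV and B = "\<lambda>_. UNIV"]
      has_sum_imp_summable[OF h] by simp
  show "((\<lambda>x. \<Sum>\<^sub>\<infinity>y. h (x, y)) has_sum S) UNIV"
    by (rule has_sum_SigmaD[OF h]) (use slice in auto)
qed

lemma has_sum_convolution_nonneg:
  fixes f g :: "'a::ab_group_add \<Rightarrow> real"
  assumes f: "(f has_sum F) UNIV" and g: "(g has_sum G) UNIV"
    and f0: "\<And>x. f x \<ge> 0" and g0: "\<And>x. g x \<ge> 0"
  shows "(\<lambda>q. f q * g (p - q)) summable_on UNIV"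
    and "((\<lambda>p. \<Sum>\<^sub>\<infinity>q. f q * g (p - q)) has_sum (F * G)) UNIV"
proof -
  have bij: "bij_betw (\<lambda>(p, q). (q, p - q)) UNIV (UNIV :: ('a \<times> 'a) set)"
    by (rule bij_betw_byWitness[where f' = "\<lambda>(q, v). (q + v, q)"]) auto
  have "((\<lambda>(q, v). f q * g v) has_sum (F * G)) UNIV"
    using has_sum_product_nonneg[OF f g f0 g0] by simp
  hence h: "((\<lambda>(p, q). f q * g (p - q)) has_sum (F * G)) UNIV"
    using has_sum_reindex_bij_betw[OF bij, of "\<lambda>(q, v). f q * g v"] by (simp add: case_prod_unfold)
  show "(\<lambda>q. f q * g (p - q)) summable_on UNIV"
    using has_sum_slices(1)[OF h] by simp
  show "((\<lambda>p. \<Sum>\<^sub>\<infinity>q. f q * g (p - q)) has_sum (F * G)) UNIV"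
    using has_sum_slices(2)[OF h] by simp
qed

lemma has_sum_convolution3_nonneg:
  fixes f1 f2 f3 :: "'a::ab_group_add \<Rightarrow> real"
  assumes f1: "(f1 has_sum F1) UNIV" and f2: "(f2 has_sum F2) UNIV" and f3: "(f3 has_sum F3) UNIV"
    and n1: "\<And>x. f1 x \<ge> 0" and n2: "\<And>x. f2 x \<ge> 0" and n3: "\<And>x. f3 x \<ge> 0"
  shows "(\<lambda>(q1, q2). f1 q1 * f2 q2 * f3 (p - q1 - q2)) summable_on UNIV"
    and "((\<lambda>p. \<Sum>\<^sub>\<infinity>(q1, q2). f1 q1 * f2 q2 * f3 (p - q1 - q2)) has_sum (F1 * F2 * F3)) UNIV"
proof -
  have bij: "bij_betw (\<lambda>(p, q1, q2). ((q1, q2), p - q1 - q2)) UNIV (UNIV :: (('a \<times> 'a) \<times> 'a) set)"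
    by (rule bij_betw_byWitness[where f' = "\<lambda>((q1, q2), v). (q1 + q2 + v, q1, q2)"]) auto
  have "((\<lambda>(q1, q2). f1 q1 * f2 q2) has_sum (F1 * F2)) UNIV"
    using has_sum_product_nonneg[OF f1 f2 n1 n2] by simp
  hence "((\<lambda>(x, v). (case x of (q1, q2) \<Rightarrow> f1 q1 * f2 q2) * f3 v) has_sum (F1 * F2 * F3))
      (UNIV \<times> UNIV)"
    by (rule has_sum_product_nonneg[OF _ f3 _ n3]) (use n1 n2 in auto)
  hence "((\<lambda>((q1, q2), v). f1 q1 * f2 q2 * f3 v) has_sum (F1 * F2 * F3)) UNIV"
    by (simp add: case_prod_unfold)
  hence h: "((\<lambda>(p, q1, q2). f1 q1 * f2 q2 * f3 (p - q1 - q2)) has_sum (F1 * F2 * F3)) UNIV"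
    using has_sum_reindex_bij_betw[OF bij, of "\<lambda>((q1, q2), v). f1 q1 * f2 q2 * f3 v"]
    by (simp add: case_prod_unfold)
  show "(\<lambda>(q1, q2). f1 q1 * f2 q2 * f3 (p - q1 - q2)) summable_on UNIV"
    using has_sum_slices(1)[OF h, of p] by (simp add: case_prod_unfold)
  show "((\<lambda>p. \<Sum>\<^sub>\<infinity>(q1, q2). f1 q1 * f2 q2 * f3 (p - q1 - q2)) has_sum (F1 * F2 * F3)) UNIV"
    using has_sum_slices(2)[OF h] by (simp add: case_prod_unfold)
qed

lemma conv_has_sum:
  fixes f g :: "idx \<Rightarrow> real"
  assumes f: "f summable_on UNIV" and g: "g summable_on UNIV"
    and bF: "\<And>q. cmod (F q) \<le> f q" and bG: "\<And>q. cmod (G q) \<le> g q"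
  shows "((\<lambda>q. F q * G (p - q)) has_sum conv F G p) UNIV"
proof -
  have f0: "f x \<ge> 0" and g0: "g x \<ge> 0" for x
    using norm_ge_zero bF bG order_trans by blast+
  have "(\<lambda>q. F q * G (p - q)) summable_on UNIV"
  proof (rule abs_summable_summable[OF Infinite_Sum.abs_summable_on_comparison_test'])
    show "(\<lambda>q. f q * g (p - q)) summable_on UNIV"
      using has_sum_convolution_nonneg(1)[OF f[unfolded summable_iff_has_sum_infsum]
          g[unfolded summable_iff_has_sum_infsum] f0 g0] .
    show "norm (F q * G (p - q)) \<le> f q * g (p - q)" for q
      unfolding norm_mult by (intro mult_mono bF bG) (use f0 in auto)
  qed
  thus ?thesis unfolding conv_def by simp
qed

lemma conv_conv_has_sum:
  fixes f1 f2 f3 :: "idx \<Rightarrow> real"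
  assumes s1: "f1 summable_on UNIV" and s2: "f2 summable_on UNIV" and s3: "f3 summable_on UNIV"
    and b1: "\<And>q. cmod (F1 q) \<le> f1 q" and b2: "\<And>q. cmod (F2 q) \<le> f2 q" and b3: "\<And>q. cmod (F3 q) \<le> f3 q"
  shows "((\<lambda>(q1,q2). F1 q1 * F2 q2 * F3 (p - q1 - q2)) has_sum conv (conv F1 F2) F3 p) UNIV"
proof -
  have n1: "f1 x \<ge> 0" and n2: "f2 x \<ge> 0" and n3: "f3 x \<ge> 0" for x
    using norm_ge_zero b1 b2 b3 order_trans by blast+
  define H where "H = (\<lambda>(q1,q2). F1 q1 * F2 q2 * F3 (p - q1 - q2))"
  have HS: "H summable_on UNIV"
  proof (rule abs_summable_summable[OF Infinite_Sum.abs_summable_on_comparison_test'])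
    show "(\<lambda>(q1, q2). f1 q1 * f2 q2 * f3 (p - q1 - q2)) summable_on UNIV"
      by (rule has_sum_convolution3_nonneg(1)[OF s1[unfolded summable_iff_has_sum_infsum]
          s2[unfolded summable_iff_has_sum_infsum] s3[unfolded summable_iff_has_sum_infsum] n1 n2 n3])
    show "norm (H x) \<le> (case x of (q1, q2) \<Rightarrow> f1 q1 * f2 q2 * f3 (p - q1 - q2))" for x
      unfolding H_def by (cases x) (simp add: norm_mult, intro mult_mono b1 b2 b3, use n1 n2 n3 in auto)
  qed
  have bij: "bij_betw (\<lambda>(q', q). (q, q' - q)) UNIV (UNIV :: (idx \<times> idx) set)"
    by (rule bij_betw_byWitness[where f' = "\<lambda>(q1, q2). (q1 + q2, q1)"]) auto
  have E: "(\<lambda>(q', q). F1 q * F2 (q' - q) * F3 (p - q')) = (\<lambda>x. H ((\<lambda>(q', q). (q, q' - q)) x))"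
    unfolding H_def by auto
  have PS: "(\<lambda>(q', q). F1 q * F2 (q' - q) * F3 (p - q')) summable_on (UNIV \<times> UNIV)"
    unfolding E using summable_on_reindex_bij_betw[OF bij, of H] HS by simp
  have "conv (conv F1 F2) F3 p = (\<Sum>\<^sub>\<infinity>q'. \<Sum>\<^sub>\<infinity>q. F1 q * F2 (q' - q) * F3 (p - q'))"
    unfolding conv_def
  proof (rule infsum_cong)
    fix q'
    show "(\<Sum>\<^sub>\<infinity>q. F1 q * F2 (q' - q)) * F3 (p - q') = (\<Sum>\<^sub>\<infinity>q. F1 q * F2 (q' - q) * F3 (p - q'))"
      by (rule infsum_cmult_left[symmetric])
        (use conv_has_sum[OF s1 s2 b1 b2, of q'] in \<open>auto simp: has_sum_iff\<close>)
  qed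
  also have "\<dots> = infsum (\<lambda>(q', q). F1 q * F2 (q' - q) * F3 (p - q')) (UNIV \<times> UNIV)"
    using infsum_Sigma_banach[OF PS] by simp
  also have "\<dots> = infsum H UNIV"
    unfolding E using infsum_reindex_bij_betw[OF bij, of H] by simp
  finally show ?thesis using HS unfolding H_def by (simp add: has_sum_iff)
qed

section \<open>The recursive estimate\<close>

definition gnorm :: "vcoef \<Rightarrow> idx \<Rightarrow> real" where
  "gnorm F p = norm (rvec p) * norm (F p)"

lemma gnorm_nonneg: "gnorm F p \<ge> 0"
  by (simp add: gnorm_def)

lemma cmod_dcoef_le_gnorm: "cmod (dcoef F k j q) \<le> gnorm F q"
  unfolding dcoef_grad_mode gnorm_def by (rule cmod_grad_mode_le)

definition quad_density :: "(nat \<Rightarrow> vcoef) \<Rightarrow> nat \<Rightarrow> idx \<Rightarrow> idx \<Rightarrow> (complex^3) \<times> complex" where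
  "quad_density X s p q =
     (\<Sum>m\<in>{0<..<s}. quad_mode (real m / real s) (X m q) (X (s - m) (p - q)) q (p - q))"

definition quad_div_rhs :: "(nat \<Rightarrow> vcoef) \<Rightarrow> nat \<Rightarrow> idx \<Rightarrow> complex" where
  "quad_div_rhs X s p = (\<Sum>(i,j)\<in>{(1,2),(1,3),(2,3)::3\<times>3}. \<Sum>m\<in>{0<..<s}.
         conv (dcoef (X m) i j) (dcoef (X (s - m)) j i) p
       - conv (dcoef (X m) i i) (dcoef (X (s - m)) j j) p)"

lemma has_sum_quad_density:
  assumes s: "s \<ge> 2" and sm: "\<And>m. 1 \<le> m \<Longrightarrow> m < s \<Longrightarrow> gnorm (X m) summable_on UNIV"
  shows "(quad_density X s p has_sum (curl_rhs \<omega> X s p, quad_div_rhs X s p)) UNIV"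
proof (rule has_sum_Pair)
  have conv: "((\<lambda>q. dcoef (X m) k j q * dcoef (X (s - m)) k' l (p - q)) has_sum
           conv (dcoef (X m) k j) (dcoef (X (s - m)) k' l) p) UNIV" if "m \<in> {0<..<s}" for m k j k' l
    using that by (intro conv_has_sum[OF sm sm cmod_dcoef_le_gnorm cmod_dcoef_le_gnorm]) auto
  show "((\<lambda>q. fst (quad_density X s p q)) has_sum curl_rhs \<omega> X s p) UNIV"
  proof (rule has_sum_vec_lambda)
    fix i
    have "curl_rhs \<omega> X s p $ i = - (\<Sum>k\<in>UNIV. \<Sum>m\<in>{0<..<s}. of_real (real m / real s) *
          (\<Sum>j\<in>UNIV. \<Sum>l\<in>UNIV. of_int (eps i j l) *
              conv (dcoef (X m) k j) (dcoef (X (s - m)) k l) p))"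
      using s by (simp add: curl_rhs_def)
    moreover have "fst (quad_density X s p q) $ i = - (\<Sum>k\<in>UNIV. \<Sum>m\<in>{0<..<s}. of_real (real m / real s) *
          (\<Sum>j\<in>UNIV. \<Sum>l\<in>UNIV. of_int (eps i j l) *
              (dcoef (X m) k j q * dcoef (X (s - m)) k l (p - q))))" for q
      unfolding quad_density_def quad_mode_def fst_sum sum_component dcoef_grad_mode
      by (simp add: sum_negf) (rule sum.swap)
    moreover have "((\<lambda>q. - (\<Sum>k\<in>UNIV. \<Sum>m\<in>{0<..<s}. of_real (real m / real s) *
          (\<Sum>j\<in>UNIV. \<Sum>l\<in>UNIV. of_int (eps i j l) *
              (dcoef (X m) k j q * dcoef (X (s - m)) k l (p - q))))) has_sum
          - (\<Sum>k\<in>UNIV. \<Sum>m\<in>{0<..<s}. of_real (real m / real s) *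
          (\<Sum>j\<in>UNIV. \<Sum>l\<in>UNIV. of_int (eps i j l) *
              conv (dcoef (X m) k j) (dcoef (X (s - m)) k l) p))) UNIV"
      by (intro has_sum_uminusI has_sum_sum finite_UNIV finite_greaterThanLessThan has_sum_cmult_right)
        (auto intro: conv)
    ultimately show "((\<lambda>q. fst (quad_density X s p q) $ i) has_sum curl_rhs \<omega> X s p $ i) UNIV"
      by simp
  qed
  have "snd (quad_density X s p q) = (\<Sum>(i,j)\<in>{(1,2),(1,3),(2,3)::3\<times>3}. \<Sum>m\<in>{0<..<s}.
         dcoef (X m) i j q * dcoef (X (s - m)) j i (p - q)
       - dcoef (X m) i i q * dcoef (X (s - m)) j j (p - q))" for q
    unfolding quad_density_def quad_mode_def snd_sum dcoef_grad_mode snd_conv case_prod_unfold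
    by (rule sum.swap)
  moreover have "((\<lambda>q. \<Sum>(i,j)\<in>{(1,2),(1,3),(2,3)::3\<times>3}. \<Sum>m\<in>{0<..<s}.
         dcoef (X m) i j q * dcoef (X (s - m)) j i (p - q)
       - dcoef (X m) i i q * dcoef (X (s - m)) j j (p - q)) has_sum quad_div_rhs X s p) UNIV"
    unfolding quad_div_rhs_def case_prod_unfold
    by (intro has_sum_sum finite.intros has_sum_diff) (auto intro: conv)
  ultimately show "((\<lambda>q. snd (quad_density X s p q)) has_sum quad_div_rhs X s p) UNIV"
    by simp
qed

lemma quad_density_reflect:
  assumes "s \<ge> 2"
  shows "quad_density X s p (p - q)
     = (\<Sum>m\<in>{0<..<s}. quad_mode (1 - real m / real s) (X (s - m) (p - q)) (X m q) (p - q) q)"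
proof -
  have "quad_density X s p (p - q)
      = (\<Sum>m\<in>{0<..<s}. quad_mode (real m / real s) (X m (p - q)) (X (s - m) q) (p - q) q)"
    unfolding quad_density_def by simp
  also have "\<dots> = (\<Sum>m\<in>{0<..<s}.
      quad_mode (real (s - m) / real s) (X (s - m) (p - q)) (X (s - (s - m)) q) (p - q) q)"
    by (rule sum.reindex_bij_witness[where i = "\<lambda>m. s - m" and j = "\<lambda>m. s - m"]) auto
  also have "\<dots> = (\<Sum>m\<in>{0<..<s}. quad_mode (1 - real m / real s) (X (s - m) (p - q)) (X m q) (p - q) q)"
    using assms by (intro sum.cong refl) (auto simp: of_nat_diff field_simps)
  finally show ?thesis .
qed

text \<open>Adding the density at \<open>q\<close> and at \<open>p - q\<close> pairs the weight \<open>m/s\<close> with \<open>1 - m/s\<close>, so that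
  the bound for the symmetrized quadratic mode applies termwise.\<close>

lemma norm_quad_rhs_le:
  assumes s: "s \<ge> 2" and sm: "\<And>m. 1 \<le> m \<Longrightarrow> m < s \<Longrightarrow> gnorm (X m) summable_on UNIV"
  shows "norm (curl_rhs \<omega> X s p, quad_div_rhs X s p)
     \<le> kappa s * (\<Sum>m\<in>{0<..<s}. \<Sum>\<^sub>\<infinity>q. gnorm (X m) q * gnorm (X (s - m)) (p - q))"
proof -
  define T where "T = (curl_rhs \<omega> X s p, quad_div_rhs X s p)"
  define B where "B = (\<Sum>m\<in>{0<..<s}. \<Sum>\<^sub>\<infinity>q. gnorm (X m) q * gnorm (X (s - m)) (p - q))"
  have Y: "(quad_density X s p has_sum T) UNIV"
    unfolding T_def by (rule has_sum_quad_density[OF s sm])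
  have bij: "bij_betw (\<lambda>q. p - q) (UNIV :: idx set) UNIV"
    by (rule bij_betw_byWitness[where f' = "\<lambda>q. p - q"]) auto
  have YY: "((\<lambda>q. quad_density X s p q + quad_density X s p (p - q)) has_sum (T + T)) UNIV"
    by (rule has_sum_add[OF Y]) (use has_sum_reindex_bij_betw[OF bij, of "quad_density X s p" T] Y in simp)
  have BS: "((\<lambda>q. \<Sum>m\<in>{0<..<s}. 2 * kappa s * (gnorm (X m) q * gnorm (X (s - m)) (p - q)))
      has_sum (2 * kappa s * B)) UNIV"
    unfolding B_def sum_distrib_left
  proof (intro has_sum_sum finite_greaterThanLessThan has_sum_cmult_right)
    fix m assume "m \<in> {0<..<s}"
    hence "(gnorm (X m) has_sum infsum (gnorm (X m)) UNIV) UNIV"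
      "(gnorm (X (s - m)) has_sum infsum (gnorm (X (s - m))) UNIV) UNIV"
      using sm by auto
    from has_sum_convolution_nonneg(1)[OF this gnorm_nonneg gnorm_nonneg]
    show "((\<lambda>q. gnorm (X m) q * gnorm (X (s - m)) (p - q)) has_sum
        (\<Sum>\<^sub>\<infinity>q. gnorm (X m) q * gnorm (X (s - m)) (p - q))) UNIV"
      by (simp add: summable_iff_has_sum_infsum)
  qed
  have "norm (quad_density X s p q + quad_density X s p (p - q))
      \<le> (\<Sum>m\<in>{0<..<s}. 2 * kappa s * (gnorm (X m) q * gnorm (X (s - m)) (p - q)))" for q
  proof -
    have "norm (quad_density X s p q + quad_density X s p (p - q))
        = norm (\<Sum>m\<in>{0<..<s}. quad_mode (real m / real s) (X m q) (X (s - m) (p - q)) q (p - q)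
            + quad_mode (1 - real m / real s) (X (s - m) (p - q)) (X m q) (p - q) q)"
      unfolding quad_density_reflect[OF s] by (simp add: quad_density_def sum.distrib)
    also have "\<dots> \<le> (\<Sum>m\<in>{0<..<s}. norm (quad_mode (real m / real s) (X m q) (X (s - m) (p - q)) q (p - q)
            + quad_mode (1 - real m / real s) (X (s - m) (p - q)) (X m q) (p - q) q))"
      by (rule norm_sum)
    also have "\<dots> \<le> (\<Sum>m\<in>{0<..<s}. 2 * kappa s * (gnorm (X m) q * gnorm (X (s - m)) (p - q)))"
    proof (rule sum_mono)
      fix m assume m: "m \<in> {0<..<s}"
      have "norm (quad_mode (real m / real s) (X m q) (X (s - m) (p - q)) q (p - q)
            + quad_mode (1 - real m / real s) (X (s - m) (p - q)) (X m q) (p - q) q)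
          \<le> (1 + (sqrt 2 - 1) * \<bar>2 * (real m / real s) - 1\<bar>)
            * (norm (rvec q) * norm (rvec (p - q)) * norm (X m q) * norm (X (s - m) (p - q)))"
        by (rule norm_quad_mode_sym_le) (use m in auto)
      also have "\<dots> \<le> 2 * kappa s * (norm (rvec q) * norm (rvec (p - q)) * norm (X m q) * norm (X (s - m) (p - q)))"
        by (rule mult_right_mono[OF quad_weight_le_kappa]) (use m in auto)
      finally show "norm (quad_mode (real m / real s) (X m q) (X (s - m) (p - q)) q (p - q)
            + quad_mode (1 - real m / real s) (X (s - m) (p - q)) (X m q) (p - q) q)
          \<le> 2 * kappa s * (gnorm (X m) q * gnorm (X (s - m)) (p - q))"
        by (simp add: gnorm_def mult_ac)
    qed
    finally show ?thesis .
  qed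
  hence "norm (T + T) \<le> 2 * kappa s * B"
    by (intro norm_infsum_le[OF YY BS])
  also have "norm (T + T) = 2 * norm T"
    by (metis norm_scaleR real_norm_def abs_numeral scaleR_2)
  finally show ?thesis unfolding T_def B_def by simp
qed

definition triples :: "nat \<Rightarrow> (nat \<times> nat \<times> nat) set" where
  "triples s = {(l,m,n). 1 \<le> l \<and> 1 \<le> m \<and> 1 \<le> n \<and> l + m + n = s}"

lemma finite_triples: "finite (triples s)"
  by (rule finite_subset[of _ "{..s} \<times> {..s} \<times> {..s}"]) (auto simp: triples_def)

definition cubic_div_rhs :: "(nat \<Rightarrow> vcoef) \<Rightarrow> nat \<Rightarrow> idx \<Rightarrow> complex" where
  "cubic_div_rhs X s p = (\<Sum>i\<in>UNIV. \<Sum>j\<in>UNIV. \<Sum>k\<in>UNIV. \<Sum>(l,m,n)\<in>triples s.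
     of_int (eps i j k) * conv (conv (dcoef (X l) 1 i) (dcoef (X m) 2 j)) (dcoef (X n) 3 k) p)"

lemma div_rhs_eq: "div_rhs X s p = quad_div_rhs X s p - cubic_div_rhs X s p"
  unfolding div_rhs_def quad_div_rhs_def cubic_div_rhs_def triples_def by (rule refl)

definition cubic_density :: "(nat \<Rightarrow> vcoef) \<Rightarrow> idx \<Rightarrow> nat \<times> nat \<times> nat \<Rightarrow> idx \<times> idx \<Rightarrow> complex" where
  "cubic_density X p c x = (case c of (l,m,n) \<Rightarrow> case x of (q1,q2) \<Rightarrow>
      cubic_mode (X l q1) (X m q2) (X n (p - q1 - q2)) q1 q2 (p - q1 - q2))"

lemma has_sum_cubic_density:
  assumes sm: "\<And>m. 1 \<le> m \<Longrightarrow> m < s \<Longrightarrow> gnorm (X m) summable_on UNIV"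
  shows "((\<lambda>x. \<Sum>c\<in>triples s. cubic_density X p c x) has_sum cubic_div_rhs X s p) UNIV"
proof -
  have conv: "((\<lambda>x. of_int (eps i j k) * (case x of (q1,q2) \<Rightarrow>
        dcoef (X l) 1 i q1 * dcoef (X m) 2 j q2 * dcoef (X n) 3 k (p - q1 - q2)))
      has_sum of_int (eps i j k) * conv (conv (dcoef (X l) 1 i) (dcoef (X m) 2 j)) (dcoef (X n) 3 k) p) UNIV"
    if "(l, m, n) \<in> triples s" for i j k l m n
    using that unfolding triples_def
    by (intro has_sum_cmult_right conv_conv_has_sum[OF sm sm sm cmod_dcoef_le_gnorm
        cmod_dcoef_le_gnorm cmod_dcoef_le_gnorm]) auto
  have "(\<Sum>i\<in>UNIV. \<Sum>j\<in>UNIV. \<Sum>k\<in>UNIV. \<Sum>c\<in>triples s. of_int (eps i j k) *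
      (case c of (l,m,n) \<Rightarrow> case x of (q1,q2) \<Rightarrow>
        dcoef (X l) 1 i q1 * dcoef (X m) 2 j q2 * dcoef (X n) 3 k (p - q1 - q2)))
    = (\<Sum>c\<in>triples s. cubic_density X p c x)" for x
  proof -
    have "(\<Sum>i\<in>UNIV. \<Sum>j\<in>UNIV. \<Sum>k\<in>UNIV. \<Sum>c\<in>triples s. f i j k c)
        = (\<Sum>c\<in>triples s. \<Sum>i\<in>UNIV. \<Sum>j\<in>UNIV. \<Sum>k\<in>UNIV. f i j k c)" for f :: "3 \<Rightarrow> 3 \<Rightarrow> 3 \<Rightarrow> _ \<Rightarrow> complex"
      by (subst (3) sum.swap, subst (2) sum.swap, subst sum.swap) simp
    thus ?thesis
      by (simp only:) (intro sum.cong refl, auto simp: cubic_density_def cubic_mode_def dcoef_grad_mode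
          split: prod.splits)
  qed
  moreover have "((\<lambda>x. \<Sum>i\<in>UNIV. \<Sum>j\<in>UNIV. \<Sum>k\<in>UNIV. \<Sum>c\<in>triples s. of_int (eps i j k) *
      (case c of (l,m,n) \<Rightarrow> case x of (q1,q2) \<Rightarrow>
        dcoef (X l) 1 i q1 * dcoef (X m) 2 j q2 * dcoef (X n) 3 k (p - q1 - q2)))
     has_sum cubic_div_rhs X s p) UNIV"
    unfolding cubic_div_rhs_def
    by (intro has_sum_sum finite_triples finite_UNIV) (auto intro: conv)
  ultimately show ?thesis by simp
qed

definition swap12 :: "'a \<times> 'a \<times> 'a \<Rightarrow> 'a \<times> 'a \<times> 'a" where "swap12 = (\<lambda>(a,b,c). (b,a,c))"
definition swap13 :: "'a \<times> 'a \<times> 'a \<Rightarrow> 'a \<times> 'a \<times> 'a" where "swap13 = (\<lambda>(a,b,c). (c,b,a))"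
definition swap23 :: "'a \<times> 'a \<times> 'a \<Rightarrow> 'a \<times> 'a \<times> 'a" where "swap23 = (\<lambda>(a,b,c). (a,c,b))"
definition rotl :: "'a \<times> 'a \<times> 'a \<Rightarrow> 'a \<times> 'a \<times> 'a" where "rotl = (\<lambda>(a,b,c). (b,c,a))"
definition rotr :: "'a \<times> 'a \<times> 'a \<Rightarrow> 'a \<times> 'a \<times> 'a" where "rotr = (\<lambda>(a,b,c). (c,a,b))"

lemmas triple_perm_defs = swap12_def swap13_def swap23_def rotl_def rotr_def

text \<open>A permutation of the three modes \<open>(q\<^sub>1, q\<^sub>2, p - q\<^sub>1 - q\<^sub>2)\<close>, read off on the first two.\<close>

definition mode_perm :: "(idx \<times> idx \<times> idx \<Rightarrow> idx \<times> idx \<times> idx) \<Rightarrow> idx \<Rightarrow> idx \<times> idx \<Rightarrow> idx \<times> idx" where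
  "mode_perm \<sigma> p = (\<lambda>(q1, q2). case \<sigma> (q1, q2, p - q1 - q2) of (a, b, _) \<Rightarrow> (a, b))"

lemma bij_triple_perms:
  "bij_betw swap12 (triples s) (triples s)" "bij_betw swap13 (triples s) (triples s)"
  "bij_betw swap23 (triples s) (triples s)" "bij_betw rotl (triples s) (triples s)"
  "bij_betw rotr (triples s) (triples s)"
  unfolding triple_perm_defs
  apply (rule bij_betw_byWitness[where f' = "\<lambda>(a,b,c). (b,a,c)"]; force simp: triples_def)
  apply (rule bij_betw_byWitness[where f' = "\<lambda>(a,b,c). (c,b,a)"]; force simp: triples_def)
  apply (rule bij_betw_byWitness[where f' = "\<lambda>(a,b,c). (a,c,b)"]; force simp: triples_def)
  apply (rule bij_betw_byWitness[where f' = "\<lambda>(a,b,c). (c,a,b)"]; force simp: triples_def)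
  apply (rule bij_betw_byWitness[where f' = "\<lambda>(a,b,c). (b,c,a)"]; force simp: triples_def)
  done

lemma bij_mode_perms:
  "bij (mode_perm swap12 p)" "bij (mode_perm swap13 p)" "bij (mode_perm swap23 p)"
  "bij (mode_perm rotl p)" "bij (mode_perm rotr p)"
  unfolding mode_perm_def triple_perm_defs
  apply (rule bij_betw_byWitness[where f' = "\<lambda>(q1,q2). (q2,q1)"]; force)
  apply (rule bij_betw_byWitness[where f' = "\<lambda>(q1,q2). (p - q1 - q2,q2)"]; force)
  apply (rule bij_betw_byWitness[where f' = "\<lambda>(q1,q2). (q1,p - q1 - q2)"]; force)
  apply (rule bij_betw_byWitness[where f' = "\<lambda>(q1,q2). (p - q1 - q2,q1)"]; force)
  apply (rule bij_betw_byWitness[where f' = "\<lambda>(q1,q2). (q2,p - q1 - q2)"]; force)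
  done

lemma has_sum_reindex_cubic_density:
  assumes "bij_betw \<sigma> (triples s) (triples s)" "bij \<pi>"
    and "((\<lambda>x. \<Sum>c\<in>triples s. cubic_density X p c x) has_sum S) UNIV"
  shows "((\<lambda>x. \<Sum>c\<in>triples s. cubic_density X p (\<sigma> c) (\<pi> x)) has_sum S) UNIV"
proof -
  have "(\<Sum>c\<in>triples s. cubic_density X p (\<sigma> c) y) = (\<Sum>c\<in>triples s. cubic_density X p c y)" for y
    using sum.reindex_bij_betw[OF assms(1), of "\<lambda>c. cubic_density X p c y"] .
  thus ?thesis
    using has_sum_reindex_bij_betw[OF assms(2), of "\<lambda>x. \<Sum>c\<in>triples s. cubic_density X p c x"] assms(3)
    by simp
qed

lemma cubic_density_sym:
  "cubic_density X p c x + cubic_density X p (swap12 c) (mode_perm swap12 p x)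
   + cubic_density X p (swap13 c) (mode_perm swap13 p x) + cubic_density X p (swap23 c) (mode_perm swap23 p x)
   + cubic_density X p (rotl c) (mode_perm rotl p x) + cubic_density X p (rotr c) (mode_perm rotr p x)
   = (case c of (l,m,n) \<Rightarrow> case x of (q1,q2) \<Rightarrow>
       cubic_mode_sym (X l q1) (X m q2) (X n (p - q1 - q2)) q1 q2 (p - q1 - q2))"
  by (cases c; cases x)
    (simp add: cubic_density_def cubic_mode_sym_def mode_perm_def triple_perm_defs algebra_simps)

definition gnorm_triple :: "(nat \<Rightarrow> vcoef) \<Rightarrow> idx \<Rightarrow> nat \<times> nat \<times> nat \<Rightarrow> idx \<times> idx \<Rightarrow> real" where
  "gnorm_triple X p c x = (case c of (l,m,n) \<Rightarrow> case x of (q1,q2) \<Rightarrow>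
      gnorm (X l) q1 * gnorm (X m) q2 * gnorm (X n) (p - q1 - q2))"

lemma cmod_cubic_div_rhs_le:
  assumes sm: "\<And>m. 1 \<le> m \<Longrightarrow> m < s \<Longrightarrow> gnorm (X m) summable_on UNIV"
  shows "cmod (cubic_div_rhs X s p) \<le> (1/6) * (\<Sum>c\<in>triples s. infsum (gnorm_triple X p c) UNIV)"
proof -
  define S where "S = cubic_div_rhs X s p"
  define Z where "Z x = (\<Sum>c\<in>triples s. cubic_density X p c x)" for x
  have Z: "(Z has_sum S) UNIV"
    unfolding Z_def S_def by (rule has_sum_cubic_density[OF sm])
  note P = has_sum_reindex_cubic_density[OF _ _ Z[unfolded Z_def]]
  have six: "((\<lambda>x. Z x + (\<Sum>c\<in>triples s. cubic_density X p (swap12 c) (mode_perm swap12 p x))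
     + (\<Sum>c\<in>triples s. cubic_density X p (swap13 c) (mode_perm swap13 p x))
     + (\<Sum>c\<in>triples s. cubic_density X p (swap23 c) (mode_perm swap23 p x))
     + (\<Sum>c\<in>triples s. cubic_density X p (rotl c) (mode_perm rotl p x))
     + (\<Sum>c\<in>triples s. cubic_density X p (rotr c) (mode_perm rotr p x))) has_sum (6 * S)) UNIV"
    using has_sum_add[OF has_sum_add[OF has_sum_add[OF has_sum_add[OF has_sum_add[OF Z
        P[OF bij_triple_perms(1) bij_mode_perms(1)]] P[OF bij_triple_perms(2) bij_mode_perms(2)]]
        P[OF bij_triple_perms(3) bij_mode_perms(3)]] P[OF bij_triple_perms(4) bij_mode_perms(4)]]
        P[OF bij_triple_perms(5) bij_mode_perms(5)]]
    by simp
  have bound: "((\<lambda>x. \<Sum>c\<in>triples s. gnorm_triple X p c x)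
      has_sum (\<Sum>c\<in>triples s. infsum (gnorm_triple X p c) UNIV)) UNIV"
  proof (intro has_sum_sum finite_triples)
    fix c assume "c \<in> triples s"
    then obtain l m n where c: "c = (l,m,n)" "1 \<le> l" "l < s" "1 \<le> m" "m < s" "1 \<le> n" "n < s"
      by (cases c) (auto simp: triples_def)
    have "(gnorm (X k) has_sum infsum (gnorm (X k)) UNIV) UNIV" if "k \<in> {l, m, n}" for k
      using sm c that by auto
    from has_sum_convolution3_nonneg(1)[OF this this this gnorm_nonneg gnorm_nonneg gnorm_nonneg]
    show "(gnorm_triple X p c has_sum infsum (gnorm_triple X p c) UNIV) UNIV"
      unfolding c(1) gnorm_triple_def by (simp add: summable_iff_has_sum_infsum)
  qed
  have "norm (6 * S) \<le> (\<Sum>c\<in>triples s. infsum (gnorm_triple X p c) UNIV)"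
  proof (rule norm_infsum_le[OF six bound])
    fix x
    have "norm (\<Sum>c\<in>triples s. case c of (l,m,n) \<Rightarrow> case x of (q1,q2) \<Rightarrow>
          cubic_mode_sym (X l q1) (X m q2) (X n (p - q1 - q2)) q1 q2 (p - q1 - q2))
        \<le> (\<Sum>c\<in>triples s. gnorm_triple X p c x)"
      by (rule order_trans[OF norm_sum sum_mono])
        (auto simp: gnorm_triple_def gnorm_def cmod_cubic_mode_sym_le split: prod.splits)
    thus "norm (Z x + (\<Sum>c\<in>triples s. cubic_density X p (swap12 c) (mode_perm swap12 p x))
     + (\<Sum>c\<in>triples s. cubic_density X p (swap13 c) (mode_perm swap13 p x))
     + (\<Sum>c\<in>triples s. cubic_density X p (swap23 c) (mode_perm swap23 p x))
     + (\<Sum>c\<in>triples s. cubic_density X p (rotl c) (mode_perm rotl p x))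
     + (\<Sum>c\<in>triples s. cubic_density X p (rotr c) (mode_perm rotr p x)))
      \<le> (\<Sum>c\<in>triples s. gnorm_triple X p c x)"
      unfolding Z_def cubic_density_sym[symmetric] by (simp add: sum.distrib)
  qed
  thus ?thesis unfolding S_def by (simp add: norm_mult)
qed

lemma gnorm_recursive_bound:
  assumes s: "s \<ge> 2" and sm: "\<And>m. 1 \<le> m \<Longrightarrow> m < s \<Longrightarrow> gnorm (X m) summable_on UNIV"
    and curl: "\<And>p. p \<noteq> 0 \<Longrightarrow> curl_hat (X s) p = curl_rhs \<omega> X s p"
    and div: "\<And>p. p \<noteq> 0 \<Longrightarrow> div_hat (X s) p = div_rhs X s p"
  shows "gnorm (X s) summable_on UNIV"
    and "infsum (gnorm (X s)) UNIV
      \<le> kappa s * (\<Sum>m\<in>{0<..<s}. infsum (gnorm (X m)) UNIV * infsum (gnorm (X (s - m))) UNIV)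
        + (1/6) * (\<Sum>(l,m,n)\<in>triples s.
            infsum (gnorm (X l)) UNIV * infsum (gnorm (X m)) UNIV * infsum (gnorm (X n)) UNIV)"
proof -
  define Q where "Q p = (\<Sum>m\<in>{0<..<s}. \<Sum>\<^sub>\<infinity>q. gnorm (X m) q * gnorm (X (s - m)) (p - q))" for p
  define C where "C p = (\<Sum>c\<in>triples s. infsum (gnorm_triple X p c) UNIV)" for p
  define N where "N m = infsum (gnorm (X m)) UNIV" for m
  have N: "(gnorm (X m) has_sum N m) UNIV" if "1 \<le> m" "m < s" for m
    using sm[OF that] unfolding N_def by simp
  have hQ: "(Q has_sum (\<Sum>m\<in>{0<..<s}. N m * N (s - m))) UNIV"
    unfolding Q_def
    by (intro has_sum_sum finite_greaterThanLessThan has_sum_convolution_nonneg(2) N gnorm_nonneg) auto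
  have hC: "(C has_sum (\<Sum>(l,m,n)\<in>triples s. N l * N m * N n)) UNIV"
    unfolding C_def case_prod_unfold
  proof (intro has_sum_sum finite_triples)
    fix c assume "c \<in> triples s"
    then obtain l m n where c: "c = (l,m,n)" "1 \<le> l" "l < s" "1 \<le> m" "m < s" "1 \<le> n" "n < s"
      by (cases c) (auto simp: triples_def)
    show "((\<lambda>p. infsum (gnorm_triple X p c) UNIV) has_sum N (fst c) * N (fst (snd c)) * N (snd (snd c))) UNIV"
      using has_sum_convolution3_nonneg(2)[OF N N N gnorm_nonneg gnorm_nonneg gnorm_nonneg] c
      unfolding c(1) gnorm_triple_def by (simp add: case_prod_unfold)
  qed
  have Q0: "Q p \<ge> 0" and C0: "C p \<ge> 0" for p
    unfolding Q_def C_def gnorm_triple_def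
    by (intro sum_nonneg infsum_nonneg; auto intro!: mult_nonneg_nonneg gnorm_nonneg split: prod.splits)+
  have pointwise: "gnorm (X s) p \<le> kappa s * Q p + (1/6) * C p" for p
  proof (cases "p = 0")
    case True
    have "rvec 0 = 0" by (simp add: rvec_def vec_eq_iff)
    then show ?thesis using Q0 C0 kappa_nonneg[of s] s True by (simp add: gnorm_def)
  next
    case False
    have "gnorm (X s) p = norm ((curl_rhs \<omega> X s p, quad_div_rhs X s p) - (0, cubic_div_rhs X s p))"
      unfolding gnorm_def norm_curl_div_hat[symmetric] curl[OF False] div[OF False] div_rhs_eq by simp
    also have "\<dots> \<le> norm (curl_rhs \<omega> X s p, quad_div_rhs X s p) + cmod (cubic_div_rhs X s p)"
      using norm_triangle_ineq4 by (metis norm_Pair1)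
    also have "\<dots> \<le> kappa s * Q p + (1/6) * C p"
      unfolding Q_def C_def by (intro add_mono norm_quad_rhs_le[OF s sm] cmod_cubic_div_rhs_le[OF sm])
    finally show ?thesis .
  qed
  have hR: "((\<lambda>p. kappa s * Q p + (1/6) * C p)
      has_sum (kappa s * (\<Sum>m\<in>{0<..<s}. N m * N (s - m)) + (1/6) * (\<Sum>(l,m,n)\<in>triples s. N l * N m * N n))) UNIV"
    by (intro has_sum_add has_sum_cmult_right hQ hC)
  show S: "gnorm (X s) summable_on UNIV"
    by (rule summable_on_comparison_test[OF has_sum_imp_summable[OF hR]]) (use pointwise gnorm_nonneg in auto)
  show "infsum (gnorm (X s)) UNIV
      \<le> kappa s * (\<Sum>m\<in>{0<..<s}. infsum (gnorm (X m)) UNIV * infsum (gnorm (X (s - m))) UNIV)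
        + (1/6) * (\<Sum>(l,m,n)\<in>triples s.
            infsum (gnorm (X l)) UNIV * infsum (gnorm (X m)) UNIV * infsum (gnorm (X n)) UNIV)"
    using has_sum_mono[OF S[unfolded summable_iff_has_sum_infsum] hR pointwise] unfolding N_def .
qed

lemma gnorm_1_eq:
  assumes "\<omega> 0 = 0" and "X 1 0 = 0"
    and curl: "\<And>p. p \<noteq> 0 \<Longrightarrow> curl_hat (X 1) p = curl_rhs \<omega> X 1 p"
    and div: "\<And>p. p \<noteq> 0 \<Longrightarrow> div_hat (X 1) p = div_rhs X 1 p"
  shows "gnorm (X 1) p = norm (\<omega> p)"
proof (cases "p = 0")
  case True
  have "rvec 0 = 0" by (simp add: rvec_def vec_eq_iff)
  with True assms(1) show ?thesis by (simp add: gnorm_def)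
next
  case False
  have "curl_rhs \<omega> X 1 p = \<omega> p" by (simp add: curl_rhs_def vec_eq_iff)
  moreover have "triples 1 = {}" "{0<..<1::nat} = {}"
    by (auto simp: triples_def)
  hence "div_rhs X 1 p = 0"
    unfolding div_rhs_eq quad_div_rhs_def cubic_div_rhs_def by simp
  ultimately show ?thesis
    unfolding gnorm_def norm_curl_div_hat[symmetric] curl[OF False] div[OF False] by simp
qed

section \<open>The majorant series\<close>

text \<open>\<open>majorant \<Gamma> s\<close> will bound \<open>\<Sum>\<^sub>p |p| |\<xi>\<^sup>(\<^sup>s\<^sup>)\<^sub>p|\<close>.\<close>

function majorant :: "real \<Rightarrow> nat \<Rightarrow> real" where
  "majorant x s = (if s = 0 then 0 else if s = 1 then x else
     kappa s * (\<Sum>m\<in>{0<..<s}. majorant x m * majorant x (s - m))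
   + (1/6) * (\<Sum>(l,m,n)\<in>triples s. majorant x l * majorant x m * majorant x n))"
  by auto
termination
  by (relation "Wellfounded.measure snd") (auto simp: triples_def)

declare majorant.simps [simp del]

lemma majorant_0 [simp]: "majorant x 0 = 0"
  and majorant_1 [simp]: "majorant x (Suc 0) = x"
  by (simp_all add: majorant.simps)

lemma majorant_rec:
  "s \<ge> 2 \<Longrightarrow> majorant x s = kappa s * (\<Sum>m\<in>{0<..<s}. majorant x m * majorant x (s - m))
     + (1/6) * (\<Sum>(l,m,n)\<in>triples s. majorant x l * majorant x m * majorant x n)"
  by (subst majorant.simps) auto

lemma majorant_2: "majorant x 2 = x^2 / 2"
proof -
  have "{0<..<2::nat} = {1}" "triples 2 = {}" by (auto simp: triples_def)
  moreover have "kappa 2 = 1/2" by (simp add: kappa_def field_simps)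
  ultimately show ?thesis by (simp add: majorant_rec power2_eq_square)
qed

lemma mem_triplesD: "(l, m, n) \<in> triples s \<Longrightarrow> 1 \<le> l \<and> l < s \<and> 1 \<le> m \<and> m < s \<and> 1 \<le> n \<and> n < s"
  by (auto simp: triples_def)

lemma majorant_mono:
  assumes "0 \<le> x" "x \<le> y"
  shows "0 \<le> majorant x s \<and> majorant x s \<le> majorant y s"
proof (induction s rule: less_induct)
  case (less s)
  show ?case
  proof (cases "s \<ge> 2")
    case True
    have IH: "0 \<le> majorant x m" "majorant x m \<le> majorant y m" "0 \<le> majorant y m"
      if "1 \<le> m" "m < s" for m
      using less that by force+
    have k: "0 \<le> kappa s" using True by (intro kappa_nonneg) auto
    have "0 \<le> (\<Sum>m\<in>{0<..<s}. majorant x m * majorant x (s - m))"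
      by (intro sum_nonneg mult_nonneg_nonneg IH) auto
    moreover have "(\<Sum>m\<in>{0<..<s}. majorant x m * majorant x (s - m))
        \<le> (\<Sum>m\<in>{0<..<s}. majorant y m * majorant y (s - m))"
      by (intro sum_mono mult_mono IH) auto
    moreover have "0 \<le> (\<Sum>(l,m,n)\<in>triples s. majorant x l * majorant x m * majorant x n)"
      by (intro sum_nonneg) (auto dest!: mem_triplesD intro!: mult_nonneg_nonneg IH)
    moreover have "(\<Sum>(l,m,n)\<in>triples s. majorant x l * majorant x m * majorant x n)
        \<le> (\<Sum>(l,m,n)\<in>triples s. majorant y l * majorant y m * majorant y n)"
      by (intro sum_mono) (auto dest!: mem_triplesD intro!: mult_mono mult_nonneg_nonneg IH)
    ultimately show ?thesis
      unfolding majorant_rec[OF True, of x] majorant_rec[OF True, of y] using k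
      by (simp add: add_mono mult_left_mono)
  next
    case False
    then consider "s = 0" | "s = 1" by linarith
    then show ?thesis using assms by cases auto
  qed
qed

lemma majorant_nonneg: "0 \<le> x \<Longrightarrow> 0 \<le> majorant x s"
  using majorant_mono[of x x] by simp

lemma majorant_scale: "majorant x s * r ^ s = majorant (x * r) s"
proof (induction s rule: less_induct)
  case (less s)
  have IH: "majorant (x * r) k = majorant x k * r ^ k" if "k < s" for k
    using less that by simp
  show ?case
  proof (cases "s \<ge> 2")
    case True
    have "(\<Sum>m\<in>{0<..<s}. majorant x m * majorant x (s - m)) * r ^ s
        = (\<Sum>m\<in>{0<..<s}. majorant (x * r) m * majorant (x * r) (s - m))"
      unfolding sum_distrib_right
    proof (intro sum.cong refl)
      fix m assume "m \<in> {0<..<s}"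
      hence "r ^ s = r ^ m * r ^ (s - m)" by (simp flip: power_add)
      thus "majorant x m * majorant x (s - m) * r ^ s = majorant (x * r) m * majorant (x * r) (s - m)"
        using \<open>m \<in> {0<..<s}\<close> by (simp add: IH; simp add: mult_ac)
    qed
    moreover have "(\<Sum>(l,m,n)\<in>triples s. majorant x l * majorant x m * majorant x n) * r ^ s
        = (\<Sum>(l,m,n)\<in>triples s. majorant (x * r) l * majorant (x * r) m * majorant (x * r) n)"
      unfolding sum_distrib_right
    proof (intro sum.cong refl, clarify)
      fix l m n assume c: "(l, m, n) \<in> triples s"
      hence "r ^ s = r ^ l * r ^ m * r ^ n" by (auto simp: triples_def simp flip: power_add)
      thus "majorant x l * majorant x m * majorant x n * r ^ s
          = majorant (x * r) l * majorant (x * r) m * majorant (x * r) n"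
        using mem_triplesD[OF c] by (simp add: IH; simp add: mult_ac)
    qed
    ultimately show ?thesis
      unfolding majorant_rec[OF True] by (simp add: algebra_simps)
  next
    case False
    then consider "s = 0" | "s = 1" by linarith
    then show ?thesis by cases auto
  qed
qed

lemma sum_convolution_le_square:
  fixes u :: "nat \<Rightarrow> real"
  assumes u0: "\<And>n. u n \<ge> 0"
  shows "(\<Sum>s\<in>{2..N}. \<Sum>m\<in>{0<..<s}. u m * u (s - m)) \<le> (\<Sum>s\<in>{1..N-1}. u s)^2"
proof -
  define S where "S = Sigma {2..N} (\<lambda>s. {0<..<s})"
  define h where "h = (\<lambda>x::nat\<times>nat. (snd x, fst x - snd x))"
  have inj: "inj_on h S" unfolding inj_on_def h_def S_def by auto
  have sub: "h ` S \<subseteq> {1..N-1} \<times> {1..N-1}" unfolding h_def S_def by auto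
  have "(\<Sum>s\<in>{2..N}. \<Sum>m\<in>{0<..<s}. u m * u (s - m)) = (\<Sum>x\<in>S. (\<lambda>(m,n). u m * u n) (h x))"
    unfolding S_def h_def by (subst sum.Sigma) (auto simp: case_prod_unfold)
  also have "\<dots> = (\<Sum>y\<in>h ` S. (\<lambda>(m,n). u m * u n) y)"
    using sum.reindex[OF inj, of "\<lambda>(m,n). u m * u n"] by simp
  also have "\<dots> \<le> (\<Sum>y\<in>{1..N-1} \<times> {1..N-1}. (\<lambda>(m,n). u m * u n) y)"
    by (rule sum_mono2[OF _ sub]) (auto intro: mult_nonneg_nonneg u0)
  also have "\<dots> = (\<Sum>s\<in>{1..N-1}. u s)^2"
    by (simp add: power2_eq_square sum_product sum.cartesian_product)
  finally show ?thesis .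
qed

lemma sum_triples_le_cube:
  fixes u :: "nat \<Rightarrow> real"
  assumes u0: "\<And>n. u n \<ge> 0"
  shows "(\<Sum>s\<in>{2..N}. \<Sum>(l,m,n)\<in>triples s. u l * u m * u n) \<le> (\<Sum>s\<in>{1..N-1}. u s)^3"
proof -
  define S where "S = Sigma {2..N} triples"
  define g where "g = (\<lambda>(l,m,n). u l * u m * u n)"
  have inj: "inj_on snd S" unfolding inj_on_def S_def by (auto simp: triples_def)
  have sub: "snd ` S \<subseteq> {1..N-1} \<times> {1..N-1} \<times> {1..N-1}" unfolding S_def by (auto simp: triples_def)
  have "(\<Sum>s\<in>{2..N}. \<Sum>(l,m,n)\<in>triples s. u l * u m * u n) = (\<Sum>x\<in>S. g (snd x))"
    unfolding S_def g_def by (subst sum.Sigma) (auto simp: finite_triples case_prod_unfold)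
  also have "\<dots> = (\<Sum>y\<in>snd ` S. g y)"
    using sum.reindex[OF inj, of g] by simp
  also have "\<dots> \<le> (\<Sum>y\<in>{1..N-1} \<times> {1..N-1} \<times> {1..N-1}. g y)"
    by (rule sum_mono2[OF _ sub]) (auto simp: g_def intro: mult_nonneg_nonneg u0)
  also have "\<dots> = (\<Sum>s\<in>{1..N-1}. u s)^3"
    by (simp add: g_def power3_eq_cube sum_product sum.cartesian_product sum_distrib_left
        sum_distrib_right mult.assoc) (rule sum.cong; auto simp: case_prod_unfold)
  finally show ?thesis .
qed

definition majorant_psum :: "real \<Rightarrow> nat \<Rightarrow> real" where
  "majorant_psum x N = (\<Sum>s=1..N. majorant x s)"

text \<open>The negative part of \<open>kappa s\<close> is kept only for \<open>s = 2, 3\<close>, where the convolution sums are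
  explicit; the resulting correction term is needed for the invariant interval below.\<close>

lemma majorant_psum_le:
  assumes x: "x \<ge> 0" and N: "N \<ge> 3"
  shows "majorant_psum x N \<le> x + (sqrt 2 / 2) * majorant_psum x (N - 1) ^ 2 + majorant_psum x (N - 1) ^ 3 / 6
           - (sqrt 2 - 1) * (x^2 / 2 + x^3 / 3)"
proof -
  define u where "u = majorant x"
  have u0: "u n \<ge> 0" for n unfolding u_def using majorant_nonneg[OF x] by simp
  define Q where "Q s = (\<Sum>m\<in>{0<..<s}. u m * u (s - m))" for s
  define K where "K s = (\<Sum>(l,m,n)\<in>triples s. u l * u m * u n)" for s
  have Q0: "Q s \<ge> 0" for s unfolding Q_def by (intro sum_nonneg mult_nonneg_nonneg u0)
  have "{1..N} = insert 1 {2..N}" using N by auto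
  hence "majorant_psum x N = u 1 + (\<Sum>s\<in>{2..N}. kappa s * Q s + (1/6) * K s)"
    unfolding majorant_psum_def u_def Q_def K_def by (simp add: majorant_rec)
  also have "(\<Sum>s\<in>{2..N}. kappa s * Q s + (1/6) * K s)
      = (\<Sum>s\<in>{2..N}. (sqrt 2 / 2) * Q s - (sqrt 2 - 1) * (Q s / real s) + (1/6) * K s)"
    unfolding kappa_def by (intro sum.cong refl) (simp add: left_diff_distrib)
  also have "\<dots> = (sqrt 2 / 2) * (\<Sum>s\<in>{2..N}. Q s) - (sqrt 2 - 1) * (\<Sum>s\<in>{2..N}. Q s / real s)
       + (1/6) * (\<Sum>s\<in>{2..N}. K s)"
    by (simp only: sum.distrib sum_subtractf sum_distrib_left)
  finally have e: "majorant_psum x N = u 1 + ((sqrt 2 / 2) * (\<Sum>s\<in>{2..N}. Q s)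
      - (sqrt 2 - 1) * (\<Sum>s\<in>{2..N}. Q s / real s) + (1/6) * (\<Sum>s\<in>{2..N}. K s))" .
  have u1: "u 1 = x" and u2: "u 2 = x^2 / 2" unfolding u_def by (simp_all add: majorant_2)
  have "{0<..<2::nat} = {1}" "{0<..<3::nat} = {1,2}" by auto
  hence Q2: "Q 2 = x^2" and Q3: "Q 3 = x^3"
    unfolding Q_def using u1 u2 by (simp_all add: power2_eq_square power3_eq_cube)
  have "(\<Sum>s\<in>{2,3}. Q s / real s) \<le> (\<Sum>s\<in>{2..N}. Q s / real s)"
    by (rule sum_mono2) (use N Q0 in auto)
  hence low: "x^2 / 2 + x^3 / 3 \<le> (\<Sum>s\<in>{2..N}. Q s / real s)" using Q2 Q3 by simp
  have A: "(\<Sum>s\<in>{2..N}. Q s) \<le> majorant_psum x (N - 1) ^ 2"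
    unfolding Q_def majorant_psum_def u_def by (rule sum_convolution_le_square[OF u0[unfolded u_def]])
  have B: "(\<Sum>s\<in>{2..N}. K s) \<le> majorant_psum x (N - 1) ^ 3"
    unfolding K_def majorant_psum_def u_def by (rule sum_triples_le_cube[OF u0[unfolded u_def]])
  have "(sqrt 2 / 2) * (\<Sum>s\<in>{2..N}. Q s) \<le> (sqrt 2 / 2) * majorant_psum x (N - 1) ^ 2"
    by (rule mult_left_mono[OF A]) simp
  moreover have "(sqrt 2 - 1) * (x^2 / 2 + x^3 / 3) \<le> (sqrt 2 - 1) * (\<Sum>s\<in>{2..N}. Q s / real s)"
    by (rule mult_left_mono[OF low]) (simp add: real_le_rsqrt)
  ultimately show ?thesis using e u1 B by linarith
qed

lemma Tc_tilde_le: "Tc_tilde \<le> 1663/5000"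
proof -
  have "sqrt 2 \<le> 141422/100000" by (rule real_le_lsqrt) (auto simp: power2_eq_square)
  moreover have "208162/100000 \<le> sqrt (13/3)" by (rule real_le_rsqrt) (auto simp: power2_eq_square)
  ultimately show ?thesis unfolding Tc_tilde_def by linarith
qed

text \<open>The interval \<open>[0, 29/50]\<close> is invariant under the recursive bound on the partial sums at
  \<open>x = 1663/5000\<close>, a number just above \<open>Tc_tilde\<close>.\<close>

lemma majorant_psum_bounded:
  assumes "0 \<le> x" "x \<le> 1663/5000"
  shows "majorant_psum x N \<le> 29/50"
proof -
  define c :: real where "c = 1663/5000"
  have "majorant_psum c N \<le> 29/50"
  proof (induction N rule: less_induct)
    case (less N)
    show ?case
    proof (cases "N \<ge> 3")
      case True
      define y where "y = majorant_psum c (N - 1)"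
      have y0: "y \<ge> 0"
        unfolding y_def majorant_psum_def by (intro sum_nonneg majorant_nonneg) (simp add: c_def)
      have y1: "y \<le> 29/50" unfolding y_def using True by (intro less) auto
      have "(sqrt 2 / 2) * y^2 \<le> (sqrt 2 / 2) * (29/50)^2" "y^3 / 6 \<le> (29/50)^3 / 6"
        using power_mono[OF y1 y0, of 2] power_mono[OF y1 y0, of 3] by (auto intro: mult_left_mono)
      hence "c + (sqrt 2 / 2) * y ^ 2 + y ^ 3 / 6 - (sqrt 2 - 1) * (c^2 / 2 + c^3 / 3)
          \<le> c + (sqrt 2 / 2) * (29/50)^2 + (29/50)^3 / 6 - (sqrt 2 - 1) * (c^2 / 2 + c^3 / 3)"
        by linarith
      also have "\<dots> \<le> 29/50"
      proof -
        have "sqrt 2 \<le> 141422/100000" by (rule real_le_lsqrt) (auto simp: power2_eq_square)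
        thus ?thesis unfolding c_def by (simp add: power2_eq_square power3_eq_cube field_simps)
      qed
      finally have "c + (sqrt 2 / 2) * y ^ 2 + y ^ 3 / 6 - (sqrt 2 - 1) * (c^2 / 2 + c^3 / 3) \<le> 29/50" .
      thus ?thesis
        using majorant_psum_le[OF _ True, of c] unfolding y_def c_def by simp
    next
      case False
      then consider "N = 0" | "N = 1" | "N = 2" by linarith
      then show ?thesis
      proof cases
        case 3
        have "{1..2::nat} = {1,2}" by auto
        thus ?thesis using 3 by (simp add: majorant_psum_def majorant_2 c_def power2_eq_square)
      qed (simp_all add: majorant_psum_def c_def)
    qed
  qed
  moreover have "majorant_psum x N \<le> majorant_psum c N"
    unfolding majorant_psum_def c_def using majorant_mono[OF assms] by (intro sum_mono) auto
  ultimately show ?thesis by simp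
qed

lemma summable_majorant_series:
  assumes "0 \<le> G" "0 \<le> r" "G * r \<le> 1663/5000"
  shows "summable (\<lambda>s. majorant G s * r ^ s)"
proof (rule summableI_nonneg_bounded)
  have nonneg: "0 \<le> majorant (G * r) s" for s
    using assms by (simp add: majorant_nonneg)
  show "0 \<le> majorant G s * r ^ s" for s
    unfolding majorant_scale by (rule nonneg)
  fix n
  have "(\<Sum>s<n. majorant (G * r) s) \<le> (\<Sum>s\<in>{..n}. majorant (G * r) s)"
    by (rule sum_mono2) (use nonneg in auto)
  also have "\<dots> = majorant_psum (G * r) n"
    unfolding majorant_psum_def atMost_atLeast0 by (simp add: sum.atLeast_Suc_atMost)
  also have "\<dots> \<le> 29/50"
    by (rule majorant_psum_bounded) (use assms in auto)
  finally show "(\<Sum>s<n. majorant G s * r ^ s) \<le> 29/50"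
    unfolding majorant_scale .
qed

section \<open>Convergence\<close>

lemma gnorm_le_majorant:
  assumes first: "gnorm (X 1) summable_on UNIV"
    and curl: "\<And>s p. s \<ge> 2 \<Longrightarrow> p \<noteq> 0 \<Longrightarrow> curl_hat (X s) p = curl_rhs \<omega> X s p"
    and div: "\<And>s p. s \<ge> 2 \<Longrightarrow> p \<noteq> 0 \<Longrightarrow> div_hat (X s) p = div_rhs X s p"
    and "s \<ge> 1"
  shows "gnorm (X s) summable_on UNIV \<and> infsum (gnorm (X s)) UNIV \<le> majorant (infsum (gnorm (X 1)) UNIV) s"
  using \<open>s \<ge> 1\<close>
proof (induction s rule: less_induct)
  case (less s)
  define G where "G = infsum (gnorm (X 1)) UNIV"
  define N where "N m = infsum (gnorm (X m)) UNIV" for m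
  have G0: "0 \<le> G" unfolding G_def by (intro infsum_nonneg gnorm_nonneg)
  have N0: "0 \<le> N m" for m unfolding N_def by (intro infsum_nonneg gnorm_nonneg)
  show ?case
  proof (cases "s = 1")
    case True
    then show ?thesis using first by simp
  next
    case False
    hence s: "s \<ge> 2" using less.prems by simp
    have IH: "gnorm (X m) summable_on UNIV" "N m \<le> majorant G m" if "1 \<le> m" "m < s" for m
      using less.IH that unfolding N_def G_def by blast+
    have maj0: "0 \<le> majorant G m" for m using majorant_nonneg[OF G0] .
    have k: "0 \<le> kappa s" using s by (simp add: kappa_nonneg)
    note rec = gnorm_recursive_bound[OF s IH(1) curl[OF s] div[OF s]]
    have "N s \<le> kappa s * (\<Sum>m\<in>{0<..<s}. N m * N (s - m)) + (1/6) * (\<Sum>(l,m,n)\<in>triples s. N l * N m * N n)"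
      using rec(2) unfolding N_def by simp
    also have "\<dots> \<le> majorant G s"
      unfolding majorant_rec[OF s]
      by (intro add_mono mult_left_mono sum_mono k)
        (auto dest!: mem_triplesD intro!: mult_mono IH mult_nonneg_nonneg N0 maj0 simp: s)
    finally show ?thesis using rec(1) unfolding N_def G_def by simp
  qed
qed

lemma norm_rvec_ge_1:
  assumes "p \<noteq> 0"
  shows "1 \<le> norm (rvec p)"
proof -
  obtain k where "p $ k \<noteq> 0" using assms by (auto simp: vec_eq_iff)
  hence "1 \<le> \<bar>rvec p $ k\<bar>" by (simp add: rvec_def)
  also have "\<dots> \<le> norm (rvec p)" using Finite_Cartesian_Product.norm_nth_le[of "rvec p" k] by simp
  finally show ?thesis .
qed

lemma norm_field_at_le:
  assumes "F 0 = 0" and summable: "gnorm F summable_on UNIV"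
  shows "norm (field_at F a) \<le> infsum (gnorm F) UNIV"
proof -
  have bound: "norm (exp (\<i> * of_real (pdot p a)) *s F p) \<le> gnorm F p" for p
  proof (cases "p = 0")
    case False
    hence "norm (F p) \<le> gnorm F p"
      unfolding gnorm_def using mult_right_mono[OF norm_rvec_ge_1 norm_ge_zero] by simp
    thus ?thesis by (simp add: norm_vector_smult)
  qed (use assms in \<open>simp add: gnorm_def\<close>)
  have terms: "(\<lambda>p. norm (exp (\<i> * of_real (pdot p a)) *s F p)) summable_on UNIV"
    by (rule summable_on_comparison_test[OF summable]) (use bound in auto)
  have "norm (field_at F a) \<le> (\<Sum>\<^sub>\<infinity>p. norm (exp (\<i> * of_real (pdot p a)) *s F p))"
    unfolding field_at_def by (rule norm_infsum_bound[OF terms])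
  also have "\<dots> \<le> infsum (gnorm F) UNIV"
    by (rule infsum_mono[OF terms summable bound])
  finally show ?thesis .
qed

lemma summable_on_weighted_gnorm:
  assumes bound: "\<And>s. s \<ge> 1 \<Longrightarrow> gnorm (X s) summable_on UNIV \<and> infsum (gnorm (X s)) UNIV \<le> b s"
    and b: "summable (\<lambda>s. b s * r ^ s)" and b0: "\<And>s. 0 \<le> b s" and r: "0 \<le> r"
  shows "(\<lambda>(s, p). gnorm (X s) p * r ^ s) summable_on ({1..} \<times> UNIV)"
proof -
  define g where "g s = infsum (gnorm (X s)) UNIV * r ^ s" for s
  have slices: "((\<lambda>p. gnorm (X s) p * r ^ s) has_sum g s) UNIV" if "s \<in> {1..}" for s
    unfolding g_def using bound[of s] that by (intro has_sum_cmult_left) simp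
  have g0: "0 \<le> g s" for s
    unfolding g_def using r by (intro mult_nonneg_nonneg infsum_nonneg gnorm_nonneg) auto
  have summable: "summable (\<lambda>s. if s \<ge> 1 then g s else 0)"
  proof (rule summable_comparison_test'[OF b])
    show "norm (if s \<ge> 1 then g s else 0) \<le> b s * r ^ s" for s
      using bound[of s] g0[of s] b0[of s] r unfolding g_def by (auto intro: mult_right_mono)
  qed
  have "(\<lambda>s. if s \<ge> 1 then g s else 0) summable_on UNIV"
    using summable summable_on_UNIV_nonneg_real_iff[of "\<lambda>s. if s \<ge> 1 then g s else 0"] g0 by simp
  hence "(\<lambda>s. if s \<ge> 1 then g s else 0) summable_on {1..}"
    by (rule summable_on_subset_banach) simp
  hence gs: "g summable_on {1..}" by (rule summable_on_cong[THEN iffD1, rotated]) auto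
  show ?thesis
    by (rule summable_on_SigmaI[where f = "\<lambda>(s, p). gnorm (X s) p * r ^ s", OF _ gs])
      (use slices r in \<open>simp_all add: gnorm_nonneg\<close>)
qed

lemma summable_field_series:
  assumes bound: "\<And>s. s \<ge> 1 \<Longrightarrow> gnorm (X s) summable_on UNIV \<and> infsum (gnorm (X s)) UNIV \<le> b s"
    and b: "summable (\<lambda>s. b s * norm t ^ s)" and b0: "\<And>s. 0 \<le> b s"
    and mean: "\<And>s. s \<ge> 1 \<Longrightarrow> X s 0 = 0"
  shows "summable (\<lambda>s. if s = 0 then 0 else (t ^ s) *s field_at (X s) a)"
proof (rule summable_comparison_test'[OF b])
  fix s :: nat
  show "norm (if s = 0 then 0 else (t ^ s) *s field_at (X s) a) \<le> b s * norm t ^ s"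
  proof (cases "s = 0")
    case False
    hence s: "1 \<le> s" by simp
    have "norm (field_at (X s) a) \<le> infsum (gnorm (X s)) UNIV"
      using norm_field_at_le[where F = "X s", OF mean[OF s]] bound[OF s] by blast
    also have "\<dots> \<le> b s" using bound[OF s] by blast
    finally have field: "norm (field_at (X s) a) \<le> b s" .
    thus ?thesis
      using False mult_right_mono[OF field, of "norm t ^ s"]
      by (simp add: norm_vector_smult norm_power mult.commute)
  qed (simp add: b0)
qed

theorem mainTheorem2:
  fixes \<omega> :: vcoef and X :: "nat \<Rightarrow> vcoef" and \<Gamma> :: real
  assumes zero_mean: "\<omega> 0 = 0"
    and div_free: "\<And>p. (\<Sum>k\<in>UNIV. of_int (p $ k) * (\<omega> p $ k)) = 0"
    and real_field: "\<And>p. \<omega> (- p) = (\<chi> k. cnj (\<omega> p $ k))"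
    and abs_summable: "(\<lambda>p. norm (\<omega> p)) summable_on UNIV"
    and Gamma_def: "\<Gamma> = (\<Sum>\<^sub>\<infinity>p. norm (\<omega> p))"
    and xi_mean: "\<And>s. s \<ge> 1 \<Longrightarrow> X s 0 = 0"
    and xi_curl: "\<And>s p. s \<ge> 1 \<Longrightarrow> p \<noteq> 0 \<Longrightarrow> curl_hat (X s) p = curl_rhs \<omega> X s p"
    and xi_div: "\<And>s p. s \<ge> 1 \<Longrightarrow> p \<noteq> 0 \<Longrightarrow> div_hat (X s) p = div_rhs X s p"
  shows "\<forall>t::complex. norm t * \<Gamma> < Tc_tilde \<longrightarrow>
           ((\<lambda>(s, p). norm (rvec p) * norm (X s p) * norm t ^ s) summable_on ({1..} \<times> UNIV))
           \<and> (\<forall>a. summable (\<lambda>s. if s = 0 then 0 else (t ^ s) *s field_at (X s) a))"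
proof (intro allI impI conjI)
  fix t :: complex
  assume t: "norm t * \<Gamma> < Tc_tilde"
  have first: "gnorm (X 1) = (\<lambda>p. norm (\<omega> p))"
    using gnorm_1_eq[OF zero_mean xi_mean xi_curl xi_div] by auto
  have \<Gamma>: "\<Gamma> = infsum (gnorm (X 1)) UNIV" "0 \<le> \<Gamma>"
    unfolding Gamma_def first by (auto intro: infsum_nonneg)
  have bound: "gnorm (X s) summable_on UNIV \<and> infsum (gnorm (X s)) UNIV \<le> majorant \<Gamma> s" if "s \<ge> 1" for s
    unfolding \<Gamma>(1) using abs_summable first xi_curl xi_div that by (intro gnorm_le_majorant) auto
  have majorant_series: "summable (\<lambda>s. majorant \<Gamma> s * norm t ^ s)"
    using t Tc_tilde_le \<Gamma>(2) by (intro summable_majorant_series) (auto simp: mult.commute)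
  show "(\<lambda>(s, p). norm (rvec p) * norm (X s p) * norm t ^ s) summable_on ({1..} \<times> UNIV)"
    using summable_on_weighted_gnorm[OF bound majorant_series majorant_nonneg[OF \<Gamma>(2)]] unfolding gnorm_def by simp
  show "summable (\<lambda>s. if s = 0 then 0 else (t ^ s) *s field_at (X s) a)" for a
    using summable_field_series[OF bound majorant_series majorant_nonneg[OF \<Gamma>(2)] xi_mean] .
qed

end
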